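(* Let $V$ be a real vector space and $C$ a cone in $V$. Assume $X_1,\dots,X_m,Y_1,\dots,Y_n$ are $C$-antichain-convex subsets of $V$, put $X=X_1+\dots+X_m$ and $Y=Y_1+\dots+Y_n$, and assume $X\cap Y=\emptyset$. (1) If $X_1$ is $C$-upward, then $\operatorname{co}(X)\cap\operatorname{co}(Y)=\emptyset$. (2) If $X_1$ is $C$-downward, then $\operatorname{co}(X)\cap\operatorname{co}(Y)=\emptyset$.
   Context: A cone in $V$ is a subset $C$ with $\lambda C\subseteq C$ for all $\lambda>0$ (possibly empty, need not contain $0$). $S\subseteq V$ is $C$-antichain-convex iff for all $x,y\in S$ and $\lambda\in[0,1]$ with $y-x\notin C\cup(-C)$ one has $\lambda x+(1-\lambda)y\in S$. $S$ is $C$-upward iff $S+C\subseteq S$; $C$-downward iff $S-C\subseteq S$. Sums are Minkowski sums; $\operatorname{co}$ denotes convex hull. *)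

theory Defs
  imports "HOL-Analysis.Analysis"
begin

definition is_cone :: "'a::real_vector set \<Rightarrow> bool" where
  "is_cone C \<longleftrightarrow> (\<forall>t::real. t > 0 \<longrightarrow> (\<forall>c\<in>C. t *\<^sub>R c \<in> C))"

definition antichain_convex :: "'a::real_vector set \<Rightarrow> 'a set \<Rightarrow> bool" where
  "antichain_convex C S \<longleftrightarrow>
     (\<forall>x\<in>S. \<forall>y\<in>S. \<forall>t::real. 0 \<le> t \<and> t \<le> 1 \<and> y - x \<notin> C \<union> uminus ` C
        \<longrightarrow> t *\<^sub>R x + (1 - t) *\<^sub>R y \<in> S)"

definition upward :: "'a::real_vector set \<Rightarrow> 'a set \<Rightarrow> bool" where
  "upward C S \<longleftrightarrow> (\<forall>s\<in>S. \<forall>c\<in>C. s + c \<in> S)"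

definition downward :: "'a::real_vector set \<Rightarrow> 'a set \<Rightarrow> bool" where
  "downward C S \<longleftrightarrow> (\<forall>s\<in>S. \<forall>c\<in>C. s - c \<in> S)"

definition minkowski_sum :: "(nat \<Rightarrow> 'a::real_vector set) \<Rightarrow> nat \<Rightarrow> 'a set" where
  "minkowski_sum A k = {(\<Sum>i\<in>{1..k}. a i) | a. \<forall>i\<in>{1..k}. a i \<in> A i}"

end

theory Submission
  imports Defs
begin

(* Let K be the convex cone generated by C. For a C-antichain-convex set S, every convex
   combination of two points a, b of S lies in S + K: either b - a \<notin> C \<union> -C and the point
   lies in S, or it is a + t (b - a) with b - a \<in> C, or symmetrically with a - b \<in> C. Hence
   S + K is convex, so co S \<subseteq> S + K, and since C- and (-C)-antichain-convexity coincide,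
   also co S \<subseteq> S - K. Both inclusions pass to Minkowski sums. A common point of co X and
   co Y is then x + k = y - l, so y = x + (k + l) \<in> X + K, and X + K = X when X_1 is
   C-upward, contradicting X \<inter> Y = {}. The downward case is the upward case for -C. *)

lemma antichain_convex_uminus_cone:
  "antichain_convex (uminus ` C) S \<longleftrightarrow> antichain_convex C S"
proof -
  have "uminus ` C \<union> uminus ` uminus ` C = C \<union> uminus ` C"
    by (auto simp: image_image)
  then show ?thesis
    unfolding antichain_convex_def by simp
qed

lemma is_cone_uminus: "is_cone C \<Longrightarrow> is_cone (uminus ` C)"
  unfolding is_cone_def
proof (intro allI impI ballI)
  fix t :: real and c
  assume "\<forall>t>0. \<forall>c\<in>C. t *\<^sub>R c \<in> C" "t > 0" "c \<in> uminus ` C"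
  then show "t *\<^sub>R c \<in> uminus ` C"
    by (auto intro: rev_image_eqI[of "t *\<^sub>R _"])
qed

lemma downward_iff_upward_uminus: "downward C S \<longleftrightarrow> upward (uminus ` C) S"
  unfolding downward_def upward_def by auto

lemma upward_plus_convex_cone_hull:
  assumes "is_cone C" and "upward C S"
  shows "S + convex_cone hull C \<subseteq> S"
proof -
  \<comment> \<open>{k. S + k \<subseteq> S} need not be convex, but the set of k whose whole ray
      translates S into itself is a convex cone.\<close>
  define R where "R = {k. \<forall>t\<ge>0. \<forall>s\<in>S. s + t *\<^sub>R k \<in> S}"
  have "C \<subseteq> R"
  proof
    fix c assume "c \<in> C"
    have "s + t *\<^sub>R c \<in> S" if "t \<ge> 0" "s \<in> S" for t s
    proof (cases "t = 0")
      case False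
      then have "t *\<^sub>R c \<in> C" using assms(1) \<open>c \<in> C\<close> \<open>t \<ge> 0\<close> by (simp add: is_cone_def)
      then show ?thesis using assms(2) \<open>s \<in> S\<close> by (simp add: upward_def)
    qed (use that in simp)
    then show "c \<in> R" by (simp add: R_def)
  qed
  moreover have "convex_cone R"
    unfolding convex_cone_iff
  proof (intro conjI ballI allI impI)
    show "0 \<in> R" by (simp add: R_def)
  next
    fix x y assume "x \<in> R" "y \<in> R"
    then show "x + y \<in> R"
      unfolding R_def by (simp add: scaleR_add_right flip: add.assoc)
  next
    fix x and c :: real assume "x \<in> R" "c \<ge> 0"
    then show "c *\<^sub>R x \<in> R"
      unfolding R_def by simp
  qed
  ultimately have "convex_cone hull C \<subseteq> R"
    by (rule hull_minimal)
  then show ?thesis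
    unfolding R_def by (force elim: set_plus_elim dest: spec[of _ 1])
qed

lemma antichain_convex_segment_subset:
  assumes "antichain_convex C S" and "a \<in> S" and "b \<in> S" and "0 \<le> u" and "u \<le> 1"
  shows "u *\<^sub>R a + (1 - u) *\<^sub>R b \<in> S + convex_cone hull C"
proof -
  have ray_mem: "t *\<^sub>R c \<in> convex_cone hull C" if "c \<in> C" "t \<ge> 0" for c t
    by (simp add: convex_cone_hull_mul hull_inc that)
  have "b - a \<in> uminus ` C \<longleftrightarrow> a - b \<in> C"
    by (metis image_iff minus_diff_eq minus_minus)
  then consider "b - a \<in> C" | "a - b \<in> C" | "b - a \<notin> C \<union> uminus ` C"
    by blast
  then show ?thesis
  proof cases
    case 1
    have "u *\<^sub>R a + (1 - u) *\<^sub>R b = a + (1 - u) *\<^sub>R (b - a)"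
      by (simp add: algebra_simps)
    then show ?thesis
      using assms(2,5) ray_mem[OF 1] by (simp add: set_plus_intro)
  next
    case 2
    have "u *\<^sub>R a + (1 - u) *\<^sub>R b = b + u *\<^sub>R (a - b)"
      by (simp add: algebra_simps)
    then show ?thesis
      using assms(3,4) ray_mem[OF 2] by (simp add: set_plus_intro)
  next
    case 3
    then have "u *\<^sub>R a + (1 - u) *\<^sub>R b \<in> S"
      using assms unfolding antichain_convex_def by blast
    then show ?thesis
      using set_plus_intro[OF _ convex_cone_hull_contains_0] by fastforce
  qed
qed

lemma convex_plus_convex_cone_hull:
  assumes "antichain_convex C S"
  shows "convex (S + convex_cone hull C)"
  unfolding convex_alt
proof (intro ballI allI impI)
  fix x y and u :: real
  assume "x \<in> S + convex_cone hull C" "y \<in> S + convex_cone hull C" "0 \<le> u \<and> u \<le> 1"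
  then obtain a b k l where ab: "a \<in> S" "b \<in> S"
    and kl: "k \<in> convex_cone hull C" "l \<in> convex_cone hull C"
    and xy: "x = a + k" "y = b + l" and u: "0 \<le> u" "u \<le> 1"
    by (auto elim!: set_plus_elim)
  obtain s j where s: "s \<in> S" "j \<in> convex_cone hull C" "(1 - u) *\<^sub>R a + u *\<^sub>R b = s + j"
    using antichain_convex_segment_subset[OF assms ab, of "1 - u"] u by (auto elim!: set_plus_elim)
  have "(1 - u) *\<^sub>R x + u *\<^sub>R y = s + (j + ((1 - u) *\<^sub>R k + u *\<^sub>R l))"
    using s(3) by (simp add: xy algebra_simps)
  moreover have "j + ((1 - u) *\<^sub>R k + u *\<^sub>R l) \<in> convex_cone hull C"
    using s(2) kl u by (simp add: convex_cone_hull_add convex_cone_hull_mul)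
  ultimately show "(1 - u) *\<^sub>R x + u *\<^sub>R y \<in> S + convex_cone hull C"
    using s(1) by auto
qed

lemma convex_hull_subset_plus_convex_cone_hull:
  assumes "antichain_convex C S"
  shows "convex hull S \<subseteq> S + convex_cone hull C"
proof (rule hull_minimal)
  show "S \<subseteq> S + convex_cone hull C"
    using set_zero_plus2[OF convex_cone_hull_contains_0] by (simp add: add.commute)
qed (rule convex_plus_convex_cone_hull[OF assms])

lemma minkowski_sum_0 [simp]: "minkowski_sum A 0 = {0}"
  unfolding minkowski_sum_def by auto

lemma minkowski_sum_Suc: "minkowski_sum A (Suc k) = minkowski_sum A k + A (Suc k)"
proof (intro set_eqI iffI)
  fix x assume "x \<in> minkowski_sum A (Suc k)"
  then obtain a where a: "x = (\<Sum>i\<in>{1..Suc k}. a i)" "\<forall>i\<in>{1..Suc k}. a i \<in> A i"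
    unfolding minkowski_sum_def by blast
  have "(\<Sum>i\<in>{1..k}. a i) \<in> minkowski_sum A k"
    using a(2) unfolding minkowski_sum_def by auto
  moreover have "a (Suc k) \<in> A (Suc k)" using a(2) by simp
  ultimately show "x \<in> minkowski_sum A k + A (Suc k)"
    using a(1) by auto
next
  fix x assume "x \<in> minkowski_sum A k + A (Suc k)"
  then obtain a y where a: "x = (\<Sum>i\<in>{1..k}. a i) + y" "\<forall>i\<in>{1..k}. a i \<in> A i"
    and y: "y \<in> A (Suc k)"
    unfolding minkowski_sum_def by (auto elim!: set_plus_elim)
  have "(\<Sum>i\<in>{1..k}. (a(Suc k := y)) i) = (\<Sum>i\<in>{1..k}. a i)"
    by (intro sum.cong) auto
  then have "x = (\<Sum>i\<in>{1..Suc k}. (a(Suc k := y)) i)"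
    using a(1) by simp
  moreover have "\<forall>i\<in>{1..Suc k}. (a(Suc k := y)) i \<in> A i"
    using a(2) y by (auto simp: le_Suc_eq)
  ultimately show "x \<in> minkowski_sum A (Suc k)"
    unfolding minkowski_sum_def by blast
qed

lemma convex_hull_minkowski_sum_subset:
  assumes "\<forall>i\<in>{1..k}. antichain_convex C (A i)"
  shows "convex hull (minkowski_sum A k) \<subseteq> minkowski_sum A k + convex_cone hull C"
  using assms
proof (induction k)
  case 0
  then show ?case by (simp add: convex_cone_hull_contains_0)
next
  case (Suc k)
  let ?K = "convex_cone hull C"
  have "?K + ?K \<subseteq> ?K"
    by (auto elim!: set_plus_elim intro: convex_cone_hull_add)
  have "convex hull (minkowski_sum A (Suc k))
      = convex hull (minkowski_sum A k) + convex hull (A (Suc k))"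
    by (simp add: minkowski_sum_Suc convex_hull_set_plus)
  also have "\<dots> \<subseteq> (minkowski_sum A k + ?K) + (A (Suc k) + ?K)"
  proof (rule set_plus_mono2)
    show "convex hull (minkowski_sum A k) \<subseteq> minkowski_sum A k + ?K"
      using Suc by simp
    show "convex hull (A (Suc k)) \<subseteq> A (Suc k) + ?K"
      using Suc.prems by (simp add: convex_hull_subset_plus_convex_cone_hull)
  qed
  also have "\<dots> = minkowski_sum A (Suc k) + (?K + ?K)"
    by (simp add: minkowski_sum_Suc ac_simps)
  also have "\<dots> \<subseteq> minkowski_sum A (Suc k) + ?K"
    using \<open>?K + ?K \<subseteq> ?K\<close> by (rule set_plus_mono2[OF order_refl])
  finally show ?case .
qed

lemma minkowski_sum_plus_absorb:
  assumes "1 \<le> k" and "A 1 + K \<subseteq> A 1"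
  shows "minkowski_sum A k + K \<subseteq> minkowski_sum A k"
  using assms(1)
proof (induction k rule: nat_induct_at_least)
  case base
  then show ?case
    using assms(2) by (simp add: minkowski_sum_Suc[of A 0, simplified])
next
  case (Suc k)
  then have "minkowski_sum A k + K + A (Suc k) \<subseteq> minkowski_sum A k + A (Suc k)"
    by (intro set_plus_mono2) simp_all
  then show ?case
    by (simp add: minkowski_sum_Suc ac_simps)
qed

lemma convex_hull_minkowski_sums_disjoint_if_upward:
  assumes "is_cone C" and "m \<ge> 1"
    and "\<forall>i\<in>{1..m}. antichain_convex C (Xs i)"
    and "\<forall>j\<in>{1..n}. antichain_convex C (Ys j)"
    and "minkowski_sum Xs m \<inter> minkowski_sum Ys n = {}"
    and "upward C (Xs 1)"
  shows "convex hull (minkowski_sum Xs m) \<inter> convex hull (minkowski_sum Ys n) = {}"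
proof (rule ccontr)
  let ?X = "minkowski_sum Xs m" and ?Y = "minkowski_sum Ys n" and ?K = "convex_cone hull C"
  assume "convex hull ?X \<inter> convex hull ?Y \<noteq> {}"
  then obtain z where z: "z \<in> convex hull ?X" "z \<in> convex hull ?Y"
    by blast
  obtain x k where x: "x \<in> ?X" "k \<in> ?K" "z = x + k"
    using convex_hull_minkowski_sum_subset[OF assms(3)] z(1) by (auto elim!: set_plus_elim)
  have "\<forall>j\<in>{1..n}. antichain_convex (uminus ` C) (Ys j)"
    using assms(4) by (simp add: antichain_convex_uminus_cone)
  from convex_hull_minkowski_sum_subset[OF this] z(2)
  have "z \<in> ?Y + uminus ` ?K"
    by (auto simp: convex_cone_hull_linear_image[OF linear_uminus])
  then obtain y l where y: "y \<in> ?Y" "l \<in> ?K" "z = y - l"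
    by (auto elim!: set_plus_elim)
  have "?X + ?K \<subseteq> ?X"
    using assms(2) upward_plus_convex_cone_hull[OF assms(1,6)] by (rule minkowski_sum_plus_absorb)
  have "y = x + (k + l)"
    using x(3) y(3) by (simp add: algebra_simps)
  also have "\<dots> \<in> ?X"
    using \<open>?X + ?K \<subseteq> ?X\<close> x y by (auto intro: convex_cone_hull_add)
  finally show False
    using y(1) assms(5) by blast
qed

theorem corollary1:
  fixes C :: "'a::real_vector set"
    and Xs Ys :: "nat \<Rightarrow> 'a set"
    and m n :: nat
  assumes "is_cone C"
    and "m \<ge> 1" and "n \<ge> 1"
    and "\<forall>i\<in>{1..m}. antichain_convex C (Xs i)"
    and "\<forall>j\<in>{1..n}. antichain_convex C (Ys j)"
    and "minkowski_sum Xs m \<inter> minkowski_sum Ys n = {}"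
  shows "(upward C (Xs 1) \<longrightarrow>
            convex hull (minkowski_sum Xs m) \<inter> convex hull (minkowski_sum Ys n) = {})
       \<and> (downward C (Xs 1) \<longrightarrow>
            convex hull (minkowski_sum Xs m) \<inter> convex hull (minkowski_sum Ys n) = {})"
proof (intro conjI impI)
  show "convex hull (minkowski_sum Xs m) \<inter> convex hull (minkowski_sum Ys n) = {}"
    if "upward C (Xs 1)"
    using convex_hull_minkowski_sums_disjoint_if_upward[OF assms(1,2,4,5,6) that] .
  show "convex hull (minkowski_sum Xs m) \<inter> convex hull (minkowski_sum Ys n) = {}"
    if "downward C (Xs 1)"
    using convex_hull_minkowski_sums_disjoint_if_upward
        [OF is_cone_uminus[OF assms(1)] assms(2) _ _ assms(6)] assms(4,5) that by (simp add: antichain_convex_uminus_cone downward_iff_upward_uminus)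
qed

end
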